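(* Let $\nu$ be a positive measure on the unit circle and let $\Phi_n(z,t)$ be the monic orthogonal polynomials for the measure $d\nu_t(\theta)=e^{t\cos\theta}\,d\nu(\theta)$, $z=e^{i\theta}$. Then for $n\ge1$ \[ \frac{d}{dt}\Phi_n(z,t) = -\frac{\kappa_{n-1}^2}{2\kappa_n^2}\Bigl(\Phi_{n-1}(z,t)+\overline{\alpha_n}\,\Phi_{n-1}^*(z,t)\Bigr). \]
   Context: The orthonormal polynomials $\varphi_n(z,t)=\kappa_n(t)z^n+\cdots$, $\kappa_n>0$, satisfy $\int_0^{2\pi}\varphi_n\overline{\varphi_m}\,d\nu_t(\theta)=\delta_{m,n}$ with $z=e^{i\theta}$, and $\Phi_n=\varphi_n/\kappa_n$. The reversed polynomial is $\Phi_n^*(z)=z^n\overline{\Phi_n(1/\bar z)}$. The Verblunsky coefficients are $\alpha_n(t)=-\overline{\Phi_{n+1}(0,t)}$, so that $z\Phi_n=\Phi_{n+1}+\overline{\alpha_n}\Phi_n^*$ and $\kappa_n^2/\kappa_{n+1}^2=1-|\alpha_n|^2$. *)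

theory Defs
  imports "HOL-Analysis.Analysis" "HOL-Computational_Algebra.Polynomial"
begin

text \<open>A positive (finite Borel) measure nu on the unit circle is represented, via
  z = e^{i theta}, as a finite Borel measure on the real line concentrated on [0, 2 pi].\<close>

definition circle_measure :: "real measure \<Rightarrow> bool" where
  "circle_measure nu \<longleftrightarrow> finite_measure nu \<and> sets nu = sets borel \<and>
     emeasure nu (- {0..2*pi}) = 0"

text \<open>Nontrivial: not supported on a finite set (needed so that all Phi_n exist).\<close>
definition nontrivial_measure :: "real measure \<Rightarrow> bool" where
  "nontrivial_measure nu \<longleftrightarrow> \<not> (\<exists>F. finite F \<and> emeasure nu (- F) = 0)"

definition nu_t :: "real measure \<Rightarrow> real \<Rightarrow> real measure" where
  "nu_t nu t = density nu (\<lambda>\<theta>. ennreal (exp (t * cos \<theta>)))"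

definition ip :: "real measure \<Rightarrow> real \<Rightarrow> complex poly \<Rightarrow> complex poly \<Rightarrow> complex" where
  "ip nu t p q = (\<integral>\<theta>. poly p (cis \<theta>) * cnj (poly q (cis \<theta>)) \<partial>(nu_t nu t))"

definition Phi :: "real measure \<Rightarrow> real \<Rightarrow> nat \<Rightarrow> complex poly" where
  "Phi nu t n = (THE p. degree p = n \<and> lead_coeff p = 1 \<and>
                  (\<forall>k<n. ip nu t p (monom 1 k) = 0))"

text \<open>kappa_n(t) > 0, the leading coefficient of the orthonormal polynomial
  phi_n = kappa_n Phi_n, i.e. kappa_n = 1 / ||Phi_n||.\<close>
definition kappa :: "real measure \<Rightarrow> real \<Rightarrow> nat \<Rightarrow> real" where
  "kappa nu t n = 1 / sqrt (Re (ip nu t (Phi nu t n) (Phi nu t n)))"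

text \<open>Reversed polynomial Phi_n^*(z) = z^n conj(Phi_n(1/conj z)).\<close>
definition Phi_star :: "real measure \<Rightarrow> real \<Rightarrow> nat \<Rightarrow> complex \<Rightarrow> complex" where
  "Phi_star nu t n z = (\<Sum>k\<le>n. cnj (coeff (Phi nu t n) k) * z ^ (n - k))"

definition alpha :: "real measure \<Rightarrow> real \<Rightarrow> nat \<Rightarrow> complex" where
  "alpha nu t n = - cnj (poly (Phi nu t (Suc n)) 0)"

end

theory Submission
  imports Defs
begin

text \<open>
  Write \<open><p, q>\<^sub>t\<close> for the inner product of \<open>L\<^sup>2(nu\<^sub>t)\<close>. Since the weight
  \<open>exp (t cos theta)\<close> has \<open>t\<close>-derivative \<open>cos theta exp (t cos theta)\<close> and
  \<open>2 cos theta = z + conj z\<close> on the circle, differentiation under the integral gives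
  \<open>d/dt <p, q>\<^sub>t = (<z p, q>\<^sub>t + <p, z q>\<^sub>t) / 2\<close>.
  Differentiating the orthogonality relations \<open><Phi\<^sub>n, z\<^sup>k>\<^sub>t = 0\<close>, \<open>k < n\<close>, shows
  that the derivative of the monic polynomial \<open>Phi\<^sub>n\<close>, a polynomial of degree \<open>< n\<close>,
  has the moments \<open>-(<z Phi\<^sub>n, z\<^sup>k>\<^sub>t + <Phi\<^sub>n, z\<^sup>k\<^sup>+\<^sup>1>\<^sub>t) / 2\<close>. These vanish except
  for \<open>k = 0\<close> and \<open>k = n - 1\<close>, and so do the moments of \<open>Phi\<^sub>n\<^sub>-\<^sub>1\<close> and
  \<open>Phi\<^sub>n\<^sub>-\<^sub>1\<^sup>*\<close>; comparing the two remaining moments identifies the derivative, because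
  a nontrivial measure determines a polynomial of degree \<open>< n\<close> by its first \<open>n\<close> moments.
  Existence of \<open>Phi\<^sub>n\<close> and the differentiability of its coefficients in \<open>t\<close> come from
  the Szego recursion \<open>Phi\<^sub>n\<^sub>+\<^sub>1 = z Phi\<^sub>n - conj alpha\<^sub>n Phi\<^sub>n\<^sup>*\<close>, where
  \<open>conj alpha\<^sub>n = <z Phi\<^sub>n, 1>\<^sub>t / <Phi\<^sub>n, Phi\<^sub>n>\<^sub>t\<close>.
\<close>

definition bounded_borel :: "(real \<Rightarrow> complex) \<Rightarrow> bool" where
  "bounded_borel f \<longleftrightarrow> f \<in> borel_measurable borel \<and> (\<exists>B. \<forall>x. norm (f x) \<le> B)"

lemma bounded_borel_continuous:
  assumes "continuous_on UNIV f" and "\<And>x. norm (f x) \<le> B"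
  shows "bounded_borel f"
  using assms unfolding bounded_borel_def by (auto intro!: borel_measurable_continuous_onI)

lemma bounded_borel_mult:
  assumes "bounded_borel f" and "bounded_borel g"
  shows "bounded_borel (\<lambda>x. f x * g x)"
proof -
  obtain B C where "\<And>x. norm (f x) \<le> B" and "\<And>x. norm (g x) \<le> C"
    using assms by (auto simp: bounded_borel_def)
  then have "norm (f x * g x) \<le> B * C" for x
    by (simp add: norm_mult mult_mono')
  with assms show ?thesis by (auto simp: bounded_borel_def)
qed

lemma bounded_borel_cnj: "bounded_borel f \<Longrightarrow> bounded_borel (\<lambda>x. cnj (f x))"
  unfolding bounded_borel_def
  by (auto intro!: borel_measurable_continuous_on[where f = cnj] continuous_intros)

lemma bounded_borel_cos: "bounded_borel (\<lambda>x. complex_of_real (cos x))"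
  by (rule bounded_borel_continuous[where B = 1]) (auto intro!: continuous_intros)

lemma bounded_borel_poly_cis: "bounded_borel (\<lambda>x. poly p (cis x))"
proof (rule bounded_borel_continuous)
  show "continuous_on UNIV (\<lambda>x. poly p (cis x))"
    by (intro continuous_intros)
  fix x
  have "norm (poly p (cis x)) = norm (\<Sum>i\<le>degree p. coeff p i * cis x ^ i)"
    by (simp add: poly_altdef)
  also have "\<dots> \<le> (\<Sum>i\<le>degree p. norm (coeff p i * cis x ^ i))"
    by (rule norm_sum)
  also have "\<dots> = (\<Sum>i\<le>degree p. norm (coeff p i))"
    by (simp add: norm_mult norm_power)
  finally show "norm (poly p (cis x)) \<le> (\<Sum>i\<le>degree p. norm (coeff p i))" .
qed

lemma bounded_borel_poly_cnj_poly: "bounded_borel (\<lambda>x. poly p (cis x) * cnj (poly q (cis x)))"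
  by (intro bounded_borel_mult bounded_borel_cnj bounded_borel_poly_cis)

lemma poly_eq_sum_atMost:
  fixes p :: "'a::comm_semiring_1 poly"
  assumes "degree p \<le> n"
  shows "poly p x = (\<Sum>i\<le>n. coeff p i * x ^ i)"
proof -
  have "poly p x = poly (\<Sum>i\<le>n. monom (coeff p i) i) x"
    using assms by (simp only: poly_as_sum_of_monoms')
  then show ?thesis by (simp add: poly_sum poly_monom)
qed

lemma sum_monoms_lessThan:
  assumes "\<forall>i\<ge>n. coeff p i = 0"
  shows "(\<Sum>i<n. monom (coeff p i) i) = p"
  using assms by (intro poly_eqI) (auto simp: coeff_sum coeff_monom not_less)

lemma coeff_diff_eq_0_if_monic:
  assumes "degree p = n" and "lead_coeff p = 1"
    and "degree q = n" and "lead_coeff q = 1"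
  shows "\<forall>i\<ge>n. coeff (p - q) i = 0"
  using assms by (auto simp: coeff_eq_0 le_less)

lemma cis_mult_cnj: "cis x * cnj (cis x) = 1"
  by (simp add: cis_cnj cis_mult)

lemma cis_power_mult_cnj:
  assumes "k \<le> n"
  shows "cis x ^ n * cnj (cis x) ^ k = cis x ^ (n - k)"
proof -
  have "cis x ^ n * cnj (cis x) ^ k = cis x ^ (n - k) * (cis x * cnj (cis x)) ^ k"
    using assms by (simp add: power_mult_distrib power_add[symmetric])
  then show ?thesis by (simp add: cis_mult_cnj)
qed

text \<open>\<open>reversal n p\<close> is \<open>p\<^sup>*(z) = z\<^sup>n conj (p (1 / conj z))\<close>,
  for \<open>p\<close> of formal degree \<open>n\<close>.\<close>

definition reversal :: "nat \<Rightarrow> complex poly \<Rightarrow> complex poly" where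
  "reversal n p = (\<Sum>k\<le>n. monom (cnj (coeff p k)) (n - k))"

lemma coeff_reversal: "coeff (reversal n p) j = (if j \<le> n then cnj (coeff p (n - j)) else 0)"
proof -
  have "coeff (reversal n p) j = (\<Sum>k\<le>n. if k = n - j \<and> j \<le> n then cnj (coeff p k) else 0)"
    unfolding reversal_def coeff_sum coeff_monom by (intro sum.cong) auto
  then show ?thesis by (simp add: sum.delta)
qed

lemma poly_reversal: "poly (reversal n p) x = (\<Sum>k\<le>n. cnj (coeff p k) * x ^ (n - k))"
  by (simp add: reversal_def poly_sum poly_monom)

lemma poly_reversal_cis:
  assumes "degree p \<le> n"
  shows "poly (reversal n p) (cis x) = cis x ^ n * cnj (poly p (cis x))"
proof -
  have "cis x ^ n * cnj (poly p (cis x)) = (\<Sum>k\<le>n. cnj (coeff p k) * (cis x ^ n * cnj (cis x) ^ k))"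
    by (simp add: poly_eq_sum_atMost[OF assms] sum_distrib_left ac_simps)
  also have "\<dots> = poly (reversal n p) (cis x)"
    by (simp add: poly_reversal cis_power_mult_cnj)
  finally show ?thesis ..
qed

lemma finite_cis_preimage: "finite {x. 0 \<le> x \<and> x \<le> 2 * pi \<and> cis x = w}"
proof (cases "\<exists>b. 0 \<le> b \<and> b \<le> 2 * pi \<and> cis b = w")
  case False
  then have "{x. 0 \<le> x \<and> x \<le> 2 * pi \<and> cis x = w} = {}" by auto
  then show ?thesis by (metis finite.emptyI)
next
  case True
  then obtain b where b: "0 \<le> b" "b \<le> 2 * pi" "cis b = w" by auto
  have "{x. 0 \<le> x \<and> x \<le> 2 * pi \<and> cis x = w} \<subseteq> {b - 2 * pi, b, b + 2 * pi}"
  proof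
    fix x assume x: "x \<in> {x. 0 \<le> x \<and> x \<le> 2 * pi \<and> cis x = w}"
    then have "exp (\<i> * complex_of_real x) = exp (\<i> * complex_of_real b)"
      using b by (simp add: cis_conv_exp)
    then obtain n :: int where n: "\<i> * complex_of_real x = \<i> * complex_of_real b + of_int (2 * n) * pi * \<i>"
      by (auto simp: exp_eq)
    have xb: "x = b + 2 * pi * real_of_int n"
      using arg_cong[OF n, of Im] by simp
    have "\<bar>x - b\<bar> \<le> 2 * pi" using x b by auto
    then have "2 * pi * \<bar>real_of_int n\<bar> \<le> 2 * pi * 1"
      using xb by (simp add: abs_mult)
    then have "\<bar>real_of_int n\<bar> \<le> 1" by simp
    then have "n = -1 \<or> n = 0 \<or> n = 1" by linarith
    then show "x \<in> {b - 2 * pi, b, b + 2 * pi}" using xb by auto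
  qed
  then show ?thesis by (rule finite_subset) simp
qed

lemma has_vector_derivative_quadratic_remainder:
  fixes F :: "real \<Rightarrow> 'a::real_normed_vector"
  assumes "\<And>h. \<bar>h\<bar> \<le> 1 \<Longrightarrow> norm (F (t + h) - F t - h *\<^sub>R D) \<le> C * h\<^sup>2"
  shows "(F has_vector_derivative D) (at t)"
  unfolding has_vector_derivative_def has_derivative_at
proof (intro conjI bounded_linear_scaleR_left)
  have "norm (norm (F (t + h) - F t - h *\<^sub>R D) / norm h) \<le> C * \<bar>h\<bar>"
    if "h \<noteq> 0" and "\<bar>h\<bar> < 1" for h
  proof -
    have "C * h\<^sup>2 = C * \<bar>h\<bar> * \<bar>h\<bar>"
      by (simp add: power2_eq_square abs_mult_self_eq mult.assoc)
    then have "norm (F (t + h) - F t - h *\<^sub>R D) \<le> C * \<bar>h\<bar> * \<bar>h\<bar>"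
      using assms[of h] that(2) by (metis less_imp_le)
    then show ?thesis
      using that(1) by (simp add: pos_divide_le_eq)
  qed
  moreover have "\<forall>\<^sub>F h in at 0. h \<noteq> 0 \<and> \<bar>h\<bar> < (1::real)"
    by (auto simp: eventually_at intro!: exI[of _ 1])
  ultimately have "\<forall>\<^sub>F h in at 0. norm (norm (F (t + h) - F t - h *\<^sub>R D) / norm h) \<le> C * \<bar>h\<bar>"
    by (auto elim: eventually_mono)
  moreover have "((\<lambda>h. C * \<bar>h\<bar>) \<longlongrightarrow> 0) (at (0::real))"
    using tendsto_mult_left[OF tendsto_rabs[OF tendsto_ident_at[of 0 UNIV]], of C] by simp
  ultimately show "((\<lambda>h. norm (F (t + h) - F t - h *\<^sub>R D) / norm h) \<longlongrightarrow> 0) (at 0)"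
    by (rule Lim_null_comparison)
qed

lemma coeffwise_vector_derivative:
  fixes P :: "real \<Rightarrow> complex poly"
  assumes deg: "\<And>s. degree (P s) \<le> N"
    and diff: "\<And>k. (\<lambda>s. coeff (P s) k) differentiable (at t)"
  obtains D where "degree D \<le> N"
    and "\<And>k. ((\<lambda>s. coeff (P s) k) has_vector_derivative coeff D k) (at t)"
proof
  define D where "D = (\<Sum>k\<le>N. monom (vector_derivative (\<lambda>s. coeff (P s) k) (at t)) k)"
  have coeff_D: "coeff D k = (if k \<le> N then vector_derivative (\<lambda>s. coeff (P s) k) (at t) else 0)" for k
    by (simp add: D_def coeff_sum coeff_monom)
  then show "degree D \<le> N"
    by (intro degree_le) simp
  show "((\<lambda>s. coeff (P s) k) has_vector_derivative coeff D k) (at t)" for k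
  proof (cases "k \<le> N")
    case True
    then show ?thesis
      using diff[of k] by (simp add: coeff_D vector_derivative_works)
  next
    case False
    then have "(\<lambda>s. coeff (P s) k) = (\<lambda>s. 0)"
      using deg by (intro ext coeff_eq_0) (meson le_less_trans not_le)
    then show ?thesis
      using False by (simp add: coeff_D)
  qed
qed

lemma poly_has_vector_derivative_coeffwise:
  fixes P :: "real \<Rightarrow> complex poly"
  assumes "\<And>s. degree (P s) \<le> N" and "degree D \<le> N"
    and "\<And>k. ((\<lambda>s. coeff (P s) k) has_vector_derivative coeff D k) (at t)"
  shows "((\<lambda>s. poly (P s) z) has_vector_derivative poly D z) (at t)"
proof -
  have "((\<lambda>s. \<Sum>i\<le>N. coeff (P s) i * z ^ i) has_vector_derivative (\<Sum>i\<le>N. coeff D i * z ^ i)) (at t)"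
    by (intro has_vector_derivative_sum has_vector_derivative_mult_left assms(3))
  moreover have "(\<lambda>s. poly (P s) z) = (\<lambda>s. \<Sum>i\<le>N. coeff (P s) i * z ^ i)"
    by (intro ext poly_eq_sum_atMost assms(1))
  ultimately show ?thesis
    by (simp add: poly_eq_sum_atMost[OF assms(2)])
qed

definition circle_weight :: "real \<Rightarrow> real \<Rightarrow> real" where
  "circle_weight t x = exp (t * cos x)"

lemma circle_weight_le: "circle_weight t x \<le> exp \<bar>t\<bar>"
proof -
  have "t * cos x \<le> \<bar>t\<bar> * \<bar>cos x\<bar>"
    by (metis abs_ge_self abs_mult)
  also have "\<dots> \<le> \<bar>t\<bar>"
    by (simp add: mult_left_le abs_cos_le_one)
  finally have "t * cos x \<le> \<bar>t\<bar>" .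
  then show ?thesis by (simp add: circle_weight_def)
qed

lemma bounded_borel_circle_weight: "bounded_borel (\<lambda>x. complex_of_real (circle_weight t x))"
  using circle_weight_le
  by (intro bounded_borel_continuous[where B = "exp \<bar>t\<bar>"]) (auto intro!: continuous_intros simp: circle_weight_def)

lemma abs_exp_minus_one_minus_le: "\<bar>exp (y::real) - 1 - y\<bar> \<le> exp \<bar>y\<bar> * y\<^sup>2"
proof -
  obtain u where u: "\<bar>u\<bar> \<le> \<bar>y\<bar>" "exp y = (\<Sum>m<2. y ^ m / fact m) + exp u / fact 2 * y ^ 2"
    using Maclaurin_exp_le[of y 2] by blast
  then have "\<bar>exp y - 1 - y\<bar> = exp u / 2 * y\<^sup>2"
    by (simp add: numeral_2_eq_2)
  also have "\<dots> \<le> exp \<bar>y\<bar> * y\<^sup>2"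
  proof (intro mult_right_mono)
    have "exp u \<le> exp \<bar>y\<bar>" using u(1) by simp
    then show "exp u / 2 \<le> exp \<bar>y\<bar>" using exp_gt_zero[of u] by linarith
  qed simp
  finally show ?thesis .
qed

lemma circle_weight_taylor:
  assumes "\<bar>h\<bar> \<le> 1"
  shows "\<bar>circle_weight (t + h) x - circle_weight t x - h * cos x * circle_weight t x\<bar>
    \<le> exp (\<bar>t\<bar> + 1) * h\<^sup>2"
proof -
  define y where "y = h * cos x"
  have yh: "\<bar>y\<bar> \<le> \<bar>h\<bar>"
    unfolding y_def abs_mult using abs_cos_le_one[of x] by (simp add: mult_left_le)
  have "circle_weight (t + h) x - circle_weight t x - h * cos x * circle_weight t x
      = circle_weight t x * (exp y - 1 - y)"
    by (simp add: circle_weight_def y_def distrib_right exp_add algebra_simps)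
  then have "\<bar>circle_weight (t + h) x - circle_weight t x - h * cos x * circle_weight t x\<bar>
      = circle_weight t x * \<bar>exp y - 1 - y\<bar>"
    by (simp add: abs_mult circle_weight_def)
  also have "\<dots> \<le> exp \<bar>t\<bar> * (exp 1 * h\<^sup>2)"
  proof (intro mult_mono circle_weight_le)
    have "\<bar>exp y - 1 - y\<bar> \<le> exp \<bar>y\<bar> * y\<^sup>2" by (rule abs_exp_minus_one_minus_le)
    also have "\<dots> \<le> exp 1 * h\<^sup>2"
    proof (intro mult_mono)
      show "exp \<bar>y\<bar> \<le> exp 1" using yh assms by simp
      show "y\<^sup>2 \<le> h\<^sup>2" using yh by (simp add: abs_le_square_iff)
    qed auto
    finally show "\<bar>exp y - 1 - y\<bar> \<le> exp 1 * h\<^sup>2" .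
  qed auto
  also have "\<dots> = exp (\<bar>t\<bar> + 1) * h\<^sup>2"
    by (simp add: exp_add)
  finally show ?thesis .
qed

section \<open>The inner products of a nontrivial measure on the circle\<close>

locale nontrivial_circle_measure =
  fixes nu :: "real measure"
  assumes circle_measure: "circle_measure nu" and nontrivial: "nontrivial_measure nu"
begin

lemma finite_measure_nu: "finite_measure nu"
  and sets_nu: "sets nu = sets borel"
  and emeasure_outside_circle: "emeasure nu (- {0..2 * pi}) = 0"
  using circle_measure by (auto simp: circle_measure_def)

lemma space_nu: "space nu = UNIV"
  using sets_eq_imp_space_eq[OF sets_nu] by simp

lemma borel_measurable_nu: "borel_measurable nu = borel_measurable borel"
  by (rule measurable_cong_sets[OF sets_nu]) simp

lemma integrable_bounded_borel:
  assumes "bounded_borel f"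
  shows "integrable nu f"
proof -
  obtain B where "\<And>x. norm (f x) \<le> B" and "f \<in> borel_measurable borel"
    using assms by (auto simp: bounded_borel_def)
  then show ?thesis
    by (intro finite_measure.integrable_const_bound[OF finite_measure_nu, of _ B])
      (auto simp: borel_measurable_nu)
qed

definition weighted_integral :: "real \<Rightarrow> (real \<Rightarrow> complex) \<Rightarrow> complex" where
  "weighted_integral t f = (\<integral>x. f x * complex_of_real (circle_weight t x) \<partial>nu)"

lemma integrable_weighted:
  "bounded_borel f \<Longrightarrow> integrable nu (\<lambda>x. f x * complex_of_real (circle_weight t x))"
  by (intro integrable_bounded_borel bounded_borel_mult bounded_borel_circle_weight)

lemma weighted_integral_cong:
  "(\<And>x. f x = g x) \<Longrightarrow> weighted_integral t f = weighted_integral t g"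
  by (simp add: weighted_integral_def)

lemma weighted_integral_add:
  "bounded_borel f \<Longrightarrow> bounded_borel g \<Longrightarrow>
    weighted_integral t (\<lambda>x. f x + g x) = weighted_integral t f + weighted_integral t g"
  by (simp add: weighted_integral_def distrib_right integrable_weighted)

lemma weighted_integral_cmult: "weighted_integral t (\<lambda>x. c * f x) = c * weighted_integral t f"
  by (simp add: weighted_integral_def mult.assoc)

lemma weighted_integral_cnj: "weighted_integral t (\<lambda>x. cnj (f x)) = cnj (weighted_integral t f)"
  by (simp add: weighted_integral_def flip: Bochner_Integration.integral_cnj)

lemma weighted_integral_remainder_le:
  assumes f: "bounded_borel f" and B: "\<And>x. norm (f x) \<le> B" and h: "\<bar>h\<bar> \<le> 1"
  shows "norm (weighted_integral (t + h) f - weighted_integral t f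
           - h *\<^sub>R weighted_integral t (\<lambda>x. f x * complex_of_real (cos x)))
         \<le> B * exp (\<bar>t\<bar> + 1) * measure nu (space nu) * h\<^sup>2"
proof -
  define r where
    "r x = circle_weight (t + h) x - circle_weight t x - h * cos x * circle_weight t x" for x
  have r_le: "norm (complex_of_real (r x)) \<le> exp (\<bar>t\<bar> + 1) * h\<^sup>2" for x
    unfolding norm_of_real r_def by (rule circle_weight_taylor[OF h])
  have fr: "bounded_borel (\<lambda>x. f x * complex_of_real (r x))"
    using r_le by (intro bounded_borel_mult f bounded_borel_continuous)
      (auto intro!: continuous_intros simp: r_def circle_weight_def)
  have fcos: "bounded_borel (\<lambda>x. f x * complex_of_real (cos x))"
    by (intro bounded_borel_mult f bounded_borel_cos)
  have "weighted_integral (t + h) f - weighted_integral t f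
          - h *\<^sub>R weighted_integral t (\<lambda>x. f x * complex_of_real (cos x))
        = (\<integral>x. f x * complex_of_real (circle_weight (t + h) x) - f x * complex_of_real (circle_weight t x)
             - complex_of_real h * (f x * complex_of_real (cos x) * complex_of_real (circle_weight t x)) \<partial>nu)"
    (is "?remainder = _")
    using integrable_weighted[OF f] integrable_weighted[OF fcos]
    by (simp add: weighted_integral_def scaleR_conv_of_real)
  also have "\<dots> = (\<integral>x. f x * complex_of_real (r x) \<partial>nu)"
    by (intro Bochner_Integration.integral_cong) (simp_all add: r_def algebra_simps)
  finally have "norm ?remainder \<le> (\<integral>x. norm (f x * complex_of_real (r x)) \<partial>nu)"
    by (simp only: integral_norm_bound)
  also have "\<dots> \<le> (\<integral>x. B * (exp (\<bar>t\<bar> + 1) * h\<^sup>2) \<partial>nu)"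
  proof (intro integral_mono)
    show "integrable nu (\<lambda>x. norm (f x * complex_of_real (r x)))"
      using integrable_bounded_borel[OF fr] by simp
    show "norm (f x * complex_of_real (r x)) \<le> B * (exp (\<bar>t\<bar> + 1) * h\<^sup>2)" for x
      unfolding norm_mult using B r_le by (intro mult_mono) (auto intro: order_trans[OF norm_ge_zero])
  qed (simp add: finite_measure.integrable_const[OF finite_measure_nu])
  also have "\<dots> = B * exp (\<bar>t\<bar> + 1) * measure nu (space nu) * h\<^sup>2"
    by simp
  finally show ?thesis .
qed

lemma weighted_integral_has_vector_derivative:
  assumes f: "bounded_borel f"
  shows "((\<lambda>s. weighted_integral s f) has_vector_derivative
           weighted_integral t (\<lambda>x. f x * complex_of_real (cos x))) (at t)"
proof -
  obtain B where "\<And>x. norm (f x) \<le> B"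
    using f by (auto simp: bounded_borel_def)
  then show ?thesis
    by (intro has_vector_derivative_quadratic_remainder[where C = "B * exp (\<bar>t\<bar> + 1) * measure nu (space nu)"]
        weighted_integral_remainder_le f)
qed

lemma ip_eq_weighted_integral:
  "ip nu t p q = weighted_integral t (\<lambda>x. poly p (cis x) * cnj (poly q (cis x)))"
proof -
  have "(\<lambda>x. poly p (cis x) * cnj (poly q (cis x))) \<in> borel_measurable nu"
    using bounded_borel_poly_cnj_poly by (simp add: bounded_borel_def borel_measurable_nu)
  moreover have "(\<lambda>x. exp (t * cos x)) \<in> borel_measurable nu"
    unfolding borel_measurable_nu by (intro borel_measurable_continuous_onI continuous_intros)
  ultimately have "ip nu t p q = (\<integral>x. exp (t * cos x) *\<^sub>R (poly p (cis x) * cnj (poly q (cis x))) \<partial>nu)"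
    unfolding ip_def nu_t_def by (intro integral_density) auto
  then show ?thesis
    by (simp add: weighted_integral_def circle_weight_def scaleR_conv_of_real mult.commute)
qed

lemma ip_zero_left: "ip nu t 0 q = 0"
  by (simp add: ip_eq_weighted_integral weighted_integral_def)

lemma ip_add_left: "ip nu t (p + q) r = ip nu t p r + ip nu t q r"
  unfolding ip_eq_weighted_integral
  by (simp add: distrib_right weighted_integral_add bounded_borel_poly_cnj_poly)

lemma ip_smult_left: "ip nu t (smult c p) q = c * ip nu t p q"
  unfolding ip_eq_weighted_integral by (simp add: mult.assoc weighted_integral_cmult)

lemma ip_diff_left: "ip nu t (p - q) r = ip nu t p r - ip nu t q r"
  using ip_add_left[of t "p - q" q r] by simp

lemma ip_sum_left: "ip nu t (\<Sum>i\<in>A. P i) q = (\<Sum>i\<in>A. ip nu t (P i) q)"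
  by (induction A rule: infinite_finite_induct) (simp_all add: ip_zero_left ip_add_left)

lemma cnj_ip: "cnj (ip nu t p q) = ip nu t q p"
  unfolding ip_eq_weighted_integral weighted_integral_cnj[symmetric]
  by (simp add: mult.commute)

lemma ip_add_right: "ip nu t r (p + q) = ip nu t r p + ip nu t r q"
  by (metis cnj_ip complex_cnj_add ip_add_left)

lemma ip_smult_right: "ip nu t p (smult c q) = cnj c * ip nu t p q"
  by (metis cnj_ip complex_cnj_mult ip_smult_left)

lemma ip_sum_right: "ip nu t p (\<Sum>i\<in>A. Q i) = (\<Sum>i\<in>A. ip nu t p (Q i))"
  by (metis (no_types, lifting) cnj_ip cnj_sum ip_sum_left sum.cong)

lemma ip_expand_left:
  assumes "degree p \<le> N"
  shows "ip nu t p q = (\<Sum>i\<le>N. coeff p i * ip nu t (monom 1 i) q)"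
proof -
  have "ip nu t p q = ip nu t (\<Sum>i\<le>N. smult (coeff p i) (monom 1 i)) q"
    using poly_as_sum_of_monoms'[OF assms] by (simp add: smult_monom)
  then show ?thesis
    by (simp add: ip_sum_left ip_smult_left)
qed

lemma ip_pCons_monom: "ip nu t (pCons 0 p) (monom 1 (Suc k)) = ip nu t p (monom 1 k)"
  unfolding ip_eq_weighted_integral
  by (intro weighted_integral_cong) (simp add: poly_monom cis_mult_cnj algebra_simps)

lemma ip_reversal_monom:
  assumes "degree p \<le> n" and "k \<le> n"
  shows "ip nu t (reversal n p) (monom 1 k) = cnj (ip nu t p (monom 1 (n - k)))"
proof -
  have "poly (reversal n p) (cis x) * cnj (cis x ^ k) = cnj (poly p (cis x) * cnj (cis x ^ (n - k)))" for x
  proof -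
    have "poly (reversal n p) (cis x) * cnj (cis x ^ k) = cnj (poly p (cis x)) * (cis x ^ n * cnj (cis x) ^ k)"
      by (simp add: poly_reversal_cis[OF assms(1)] ac_simps)
    also have "\<dots> = cnj (poly p (cis x) * cnj (cis x ^ (n - k)))"
      by (simp add: cis_power_mult_cnj[OF assms(2)])
    finally show ?thesis .
  qed
  then show ?thesis
    unfolding ip_eq_weighted_integral weighted_integral_cnj[symmetric]
    by (intro weighted_integral_cong) (simp add: poly_monom)
qed

lemma ip_has_vector_derivative:
  "((\<lambda>s. ip nu s p q) has_vector_derivative
      (ip nu t (pCons 0 p) q + ip nu t p (pCons 0 q)) / 2) (at t)"
proof -
  have cos_eq: "complex_of_real (cos x) = (cis x + cnj (cis x)) / 2" for x
    by (simp add: complex_eq_iff)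
  have "weighted_integral t (\<lambda>x. poly p (cis x) * cnj (poly q (cis x)) * complex_of_real (cos x))
      = weighted_integral t (\<lambda>x. (1 / 2) * (poly (pCons 0 p) (cis x) * cnj (poly q (cis x))
                                 + poly p (cis x) * cnj (poly (pCons 0 q) (cis x))))"
    by (intro weighted_integral_cong) (simp add: cos_eq field_simps)
  also have "\<dots> = (ip nu t (pCons 0 p) q + ip nu t p (pCons 0 q)) / 2"
    by (simp only: weighted_integral_cmult ip_eq_weighted_integral
        weighted_integral_add[OF bounded_borel_poly_cnj_poly bounded_borel_poly_cnj_poly]) simp
  finally show ?thesis
    using weighted_integral_has_vector_derivative[OF bounded_borel_poly_cnj_poly, of p q t]
    by (simp only: ip_eq_weighted_integral)
qed

lemma ip_self_eq_integral:
  "ip nu t p p = complex_of_real (\<integral>x. (cmod (poly p (cis x)))\<^sup>2 * circle_weight t x \<partial>nu)"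
proof -
  have "ip nu t p p = (\<integral>x. complex_of_real ((cmod (poly p (cis x)))\<^sup>2 * circle_weight t x) \<partial>nu)"
    unfolding ip_eq_weighted_integral weighted_integral_def
    by (intro Bochner_Integration.integral_cong) (simp_all add: complex_mult_cnj cmod_power2)
  then show ?thesis
    by (simp only: integral_complex_of_real)
qed

lemma ip_self_real: "ip nu t p p = complex_of_real (Re (ip nu t p p))"
  by (simp add: ip_self_eq_integral)

lemma poly_eq_0_if_AE_cis:
  assumes "AE x in nu. poly p (cis x) = 0"
  shows "p = 0"
proof (rule ccontr)
  assume "p \<noteq> 0"
  define Z where "Z = {x. 0 \<le> x \<and> x \<le> 2 * pi \<and> poly p (cis x) = 0}"
  have "Z \<subseteq> (\<Union>w\<in>{w. poly p w = 0}. {x. 0 \<le> x \<and> x \<le> 2 * pi \<and> cis x = w})"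
    by (auto simp: Z_def)
  then have "finite Z"
    using poly_roots_finite[OF \<open>p \<noteq> 0\<close>] finite_cis_preimage by (blast intro: finite_subset)
  have "- {0..2 * pi} \<in> null_sets nu"
    using emeasure_outside_circle by (auto simp: null_sets_def sets_nu)
  then have "AE x in nu. x \<in> {0..2 * pi}"
    by (rule AE_I') auto
  with assms have "AE x in nu. x \<in> Z"
    by eventually_elim (auto simp: Z_def)
  moreover have "- Z \<in> sets nu"
    using \<open>finite Z\<close> by (simp add: sets_nu finite_imp_closed borel_closed)
  ultimately have "emeasure nu (- Z) = 0"
    using AE_iff_measurable[of "- Z" nu "\<lambda>x. x \<in> Z"] by (auto simp: space_nu)
  with \<open>finite Z\<close> nontrivial show False
    unfolding nontrivial_measure_def by blast
qed

lemma ip_self_pos: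
  assumes "p \<noteq> 0"
  shows "Re (ip nu t p p) > 0"
proof -
  define g where "g x = (cmod (poly p (cis x)))\<^sup>2 * circle_weight t x" for x
  have "integrable nu (\<lambda>x. complex_of_real (g x))"
    using integrable_weighted[OF bounded_borel_poly_cnj_poly, of p p t]
    by (simp add: g_def complex_mult_cnj cmod_power2)
  then have int_g: "integrable nu g"
    by (simp only: complex_of_real_integrable_eq)
  have g_nonneg: "g x \<ge> 0" for x
    by (simp add: g_def circle_weight_def)
  have "(\<integral>x. g x \<partial>nu) \<noteq> 0"
  proof
    assume "(\<integral>x. g x \<partial>nu) = 0"
    then have "AE x in nu. g x = 0"
      using integral_nonneg_eq_0_iff_AE[OF int_g] g_nonneg by simp
    then have "AE x in nu. poly p (cis x) = 0"
      by eventually_elim (simp add: g_def circle_weight_def)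
    with assms show False
      using poly_eq_0_if_AE_cis by blast
  qed
  moreover have "(\<integral>x. g x \<partial>nu) \<ge> 0"
    using g_nonneg by (simp add: Bochner_Integration.integral_nonneg)
  ultimately show ?thesis
    by (simp add: ip_self_eq_integral g_def)
qed

lemma ip_self_eq_0_iff: "ip nu t p p = 0 \<longleftrightarrow> p = 0"
proof
  assume "ip nu t p p = 0"
  then show "p = 0"
    using ip_self_pos[of p t] by force
qed (simp add: ip_zero_left)

lemma ip_eq_0_if_orthogonal_monoms:
  assumes "\<forall>k<n. ip nu t p (monom 1 k) = 0" and "\<forall>i\<ge>n. coeff q i = 0"
  shows "ip nu t p q = 0"
proof -
  have "ip nu t p q = ip nu t p (\<Sum>i<n. smult (coeff q i) (monom 1 i))"
    using sum_monoms_lessThan[OF assms(2)] by (simp add: smult_monom)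
  also have "\<dots> = (\<Sum>i<n. cnj (coeff q i) * ip nu t p (monom 1 i))"
    by (simp add: ip_sum_right ip_smult_right)
  also have "\<dots> = 0"
    using assms(1) by simp
  finally show ?thesis .
qed

lemma eq_0_if_orthogonal_monoms:
  assumes "\<forall>k<n. ip nu t p (monom 1 k) = 0" and "\<forall>i\<ge>n. coeff p i = 0"
  shows "p = 0"
  using ip_eq_0_if_orthogonal_monoms[OF assms] by (simp add: ip_self_eq_0_iff)

section \<open>Monic orthogonal polynomials and the Szego recursion\<close>

definition monic_orthogonal :: "real \<Rightarrow> nat \<Rightarrow> complex poly \<Rightarrow> bool" where
  "monic_orthogonal t n p \<longleftrightarrow>
     degree p = n \<and> lead_coeff p = 1 \<and> (\<forall>k<n. ip nu t p (monom 1 k) = 0)"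

lemma monic_orthogonal_degree: "monic_orthogonal t n p \<Longrightarrow> degree p = n"
  and monic_orthogonal_coeff: "monic_orthogonal t n p \<Longrightarrow> coeff p n = 1"
  by (auto simp: monic_orthogonal_def)

lemma monic_orthogonal_unique:
  assumes "monic_orthogonal t n p" and "monic_orthogonal t n q"
  shows "p = q"
proof -
  have "p - q = 0"
  proof (rule eq_0_if_orthogonal_monoms)
    show "\<forall>k<n. ip nu t (p - q) (monom 1 k) = 0"
      using assms by (simp add: monic_orthogonal_def ip_diff_left)
    show "\<forall>i\<ge>n. coeff (p - q) i = 0"
      using assms unfolding monic_orthogonal_def by (intro coeff_diff_eq_0_if_monic) auto
  qed
  then show ?thesis by simp
qed

lemma ip_monic_orthogonal_monom:
  assumes p: "monic_orthogonal t n p" and "k \<le> n"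
  shows "ip nu t p (monom 1 k) = (if k = n then ip nu t p p else 0)"
proof (cases "k = n")
  case True
  have "ip nu t p (p - monom 1 n) = 0"
  proof (rule ip_eq_0_if_orthogonal_monoms)
    show "\<forall>i\<ge>n. coeff (p - monom 1 n) i = 0"
      using p unfolding monic_orthogonal_def
      by (intro coeff_diff_eq_0_if_monic) (auto simp: degree_monom_eq)
  qed (use p in \<open>simp add: monic_orthogonal_def\<close>)
  then have "ip nu t p p = ip nu t p (monom 1 n)"
    using ip_add_right[of t p "monom 1 n" "p - monom 1 n"] by simp
  with True show ?thesis by simp
qed (use assms in \<open>simp add: monic_orthogonal_def\<close>)

lemma ip_reversal_monic_orthogonal_monom:
  assumes p: "monic_orthogonal t n p" and "k \<le> n"
  shows "ip nu t (reversal n p) (monom 1 k) = (if k = 0 then ip nu t p p else 0)"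
proof -
  have "ip nu t (reversal n p) (monom 1 k) = cnj (ip nu t p (monom 1 (n - k)))"
    using p assms(2) by (intro ip_reversal_monom) (auto simp: monic_orthogonal_def)
  also have "\<dots> = (if k = 0 then ip nu t p p else 0)"
    using ip_monic_orthogonal_monom[OF p, of "n - k"] assms(2) cnj_ip[of t p p] by auto
  finally show ?thesis .
qed

text \<open>For \<open>p = Phi\<^sub>n\<close> this is \<open>conj alpha\<^sub>n\<close>.\<close>

definition szego_coeff :: "real \<Rightarrow> complex poly \<Rightarrow> complex" where
  "szego_coeff t p = ip nu t (pCons 0 p) 1 / ip nu t p p"

lemma ip_pCons_monic_orthogonal_monom:
  assumes p: "monic_orthogonal t n p" and "k \<le> n"
  shows "ip nu t (pCons 0 p) (monom 1 k) = (if k = 0 then szego_coeff t p * ip nu t p p else 0)"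
proof (cases k)
  case 0
  have "p \<noteq> 0"
    using p by (auto simp: monic_orthogonal_def)
  with 0 show ?thesis
    by (simp add: szego_coeff_def ip_self_eq_0_iff)
next
  case (Suc j)
  with assms show ?thesis
    by (simp add: ip_pCons_monom monic_orthogonal_def)
qed

lemma monic_orthogonal_Suc:
  assumes p: "monic_orthogonal t n p"
  shows "monic_orthogonal t (Suc n) (pCons 0 p - smult (szego_coeff t p) (reversal n p))"
    (is "monic_orthogonal t (Suc n) ?q")
proof -
  have coeff_q: "coeff ?q (Suc j) = coeff p j - szego_coeff t p * coeff (reversal n p) (Suc j)" for j
    by simp
  have lead: "coeff ?q (Suc n) = 1"
    using monic_orthogonal_coeff[OF p] by (simp add: coeff_q coeff_reversal)
  have "coeff ?q j = 0" if "j > Suc n" for j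
    using monic_orthogonal_degree[OF p] that by (cases j) (auto simp: coeff_reversal coeff_eq_0)
  then have "degree ?q = Suc n"
    using lead by (intro antisym degree_le le_degree) auto
  moreover have "ip nu t ?q (monom 1 k) = 0" if "k < Suc n" for k
    using that by (simp add: ip_diff_left ip_smult_left ip_pCons_monic_orthogonal_monom[OF p]
        ip_reversal_monic_orthogonal_monom[OF p])
  ultimately show ?thesis
    using lead by (simp add: monic_orthogonal_def)
qed

lemma monic_orthogonal_Phi: "monic_orthogonal t n (Phi nu t n)"
proof -
  have "\<exists>p. monic_orthogonal t n p"
  proof (induction n)
    case 0
    show ?case
      by (intro exI[of _ 1]) (simp add: monic_orthogonal_def)
  next
    case (Suc n)
    then show ?case
      using monic_orthogonal_Suc by blast
  qed
  then have "\<exists>!p. monic_orthogonal t n p"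
    using monic_orthogonal_unique by blast
  then show ?thesis
    unfolding Phi_def monic_orthogonal_def[symmetric] by (rule theI')
qed

lemma Phi_Suc:
  "Phi nu t (Suc n) = pCons 0 (Phi nu t n) - smult (szego_coeff t (Phi nu t n)) (reversal n (Phi nu t n))"
  by (intro monic_orthogonal_unique[OF monic_orthogonal_Phi] monic_orthogonal_Suc monic_orthogonal_Phi)

lemma degree_Phi: "degree (Phi nu t n) = n"
  and lead_coeff_Phi: "lead_coeff (Phi nu t n) = 1"
  using monic_orthogonal_Phi[of t n] by (auto simp: monic_orthogonal_def)

lemma Phi_neq_0: "Phi nu t n \<noteq> 0"
  using lead_coeff_Phi[of t n] by auto

lemma Phi_0: "Phi nu t 0 = 1"
  by (rule monic_orthogonal_unique[OF monic_orthogonal_Phi]) (simp add: monic_orthogonal_def)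

lemma cnj_alpha_eq: "cnj (alpha nu t n) = szego_coeff t (Phi nu t n)"
proof -
  have "poly (reversal n (Phi nu t n)) 0 = 1"
    by (simp add: poly_0_coeff_0 coeff_reversal lead_coeff_Phi[unfolded degree_Phi])
  then show ?thesis
    by (simp add: alpha_def Phi_Suc)
qed

lemma Phi_star_eq: "Phi_star nu t n z = poly (reversal n (Phi nu t n)) z"
  by (simp add: Phi_star_def poly_reversal)

lemma kappa_ratio:
  "complex_of_real ((kappa nu t n)\<^sup>2 / (2 * (kappa nu t (Suc n))\<^sup>2))
     = ip nu t (Phi nu t (Suc n)) (Phi nu t (Suc n)) / (2 * ip nu t (Phi nu t n) (Phi nu t n))"
proof -
  have "(kappa nu t m)\<^sup>2 = 1 / Re (ip nu t (Phi nu t m) (Phi nu t m))" for m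
    using ip_self_pos[OF Phi_neq_0[of t m], of t] by (simp add: kappa_def power_divide)
  then show ?thesis
    by (subst (1 2) ip_self_real) simp
qed

section \<open>Dependence on the parameter\<close>

lemma ip_family_has_vector_derivative:
  assumes deg: "\<And>s. degree (P s) \<le> N" and deg_D: "degree D \<le> N"
    and D: "\<And>k. ((\<lambda>s. coeff (P s) k) has_vector_derivative coeff D k) (at t)"
  shows "((\<lambda>s. ip nu s (P s) q) has_vector_derivative
           ip nu t D q + (ip nu t (pCons 0 (P t)) q + ip nu t (P t) (pCons 0 q)) / 2) (at t)"
proof -
  have expand: "(\<lambda>s. ip nu s (P s) q) = (\<lambda>s. \<Sum>i\<le>N. coeff (P s) i * ip nu s (monom 1 i) q)"
    by (intro ext ip_expand_left deg)
  have "degree (pCons 0 (P t)) \<le> Suc N"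
    using deg[of t] by (metis Suc_le_mono degree_pCons_le le_trans)
  then have "ip nu t (pCons 0 (P t)) q = (\<Sum>i\<le>Suc N. coeff (pCons 0 (P t)) i * ip nu t (monom 1 i) q)"
    by (rule ip_expand_left)
  also have "\<dots> = (\<Sum>i\<le>N. coeff (P t) i * ip nu t (pCons 0 (monom 1 i)) q)"
    by (simp only: sum.atMost_Suc_shift) (simp add: monom_Suc)
  finally have expand_shift: "ip nu t (pCons 0 (P t)) q = \<dots>" .
  have "((\<lambda>s. \<Sum>i\<le>N. coeff (P s) i * ip nu s (monom 1 i) q) has_vector_derivative
      (\<Sum>i\<le>N. coeff (P t) i * ((ip nu t (pCons 0 (monom 1 i)) q + ip nu t (monom 1 i) (pCons 0 q)) / 2)
             + coeff D i * ip nu t (monom 1 i) q)) (at t)"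
    by (intro has_vector_derivative_sum has_vector_derivative_mult D ip_has_vector_derivative)
  then show ?thesis
    by (simp add: expand expand_shift ip_expand_left[OF deg_D] ip_expand_left[OF deg]
        sum.distrib sum_divide_distrib add_divide_distrib algebra_simps)
qed

lemma ip_family_differentiable:
  assumes "\<And>s. degree (P s) \<le> N" and "\<And>k. (\<lambda>s. coeff (P s) k) differentiable (at t)"
  shows "(\<lambda>s. ip nu s (P s) q) differentiable (at t)"
proof -
  obtain D where "degree D \<le> N" and "\<And>k. ((\<lambda>s. coeff (P s) k) has_vector_derivative coeff D k) (at t)"
    using coeffwise_vector_derivative assms by blast
  then show ?thesis
    using assms(1) by (blast intro: differentiableI_vector ip_family_has_vector_derivative)
qed

lemma coeff_Phi_differentiable: "(\<lambda>s. coeff (Phi nu s n) k) differentiable (at t)"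
proof (induction n arbitrary: k)
  case 0
  show ?case
    by (simp add: Phi_0)
next
  case (Suc n)
  have shift: "(\<lambda>s. coeff (pCons 0 (Phi nu s n)) k) differentiable (at t)" for k
    using Suc.IH by (cases k) simp_all
  have rev: "(\<lambda>s. coeff (reversal n (Phi nu s n)) k) differentiable (at t)" for k
    using Suc.IH by (cases "k \<le> n") (simp_all add: coeff_reversal differentiable_cnj_iff)
  have "degree (pCons 0 (Phi nu s n)) \<le> Suc n" for s
    by (simp add: degree_Phi)
  then have num: "(\<lambda>s. ip nu s (pCons 0 (Phi nu s n)) 1) differentiable (at t)"
    using ip_family_differentiable[OF _ shift, of "Suc n" 1] by simp
  have den: "(\<lambda>s. ip nu s (Phi nu s n) (monom 1 n)) differentiable (at t)"
    using ip_family_differentiable[where N = n, OF _ Suc.IH] by (simp add: degree_Phi)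
  have "szego_coeff s (Phi nu s n) = ip nu s (pCons 0 (Phi nu s n)) 1 / ip nu s (Phi nu s n) (monom 1 n)" for s
    by (simp add: szego_coeff_def ip_monic_orthogonal_monom[OF monic_orthogonal_Phi])
  then have "(\<lambda>s. szego_coeff s (Phi nu s n)) differentiable (at t)"
    using differentiable_divide[OF num den]
    by (simp add: ip_monic_orthogonal_monom[OF monic_orthogonal_Phi] ip_self_eq_0_iff Phi_neq_0)
  then show ?case
    unfolding Phi_Suc coeff_diff coeff_smult using shift rev
    by (intro differentiable_diff differentiable_mult) auto
qed

lemma coeff_derivative_Phi_eq_0:
  assumes D: "((\<lambda>s. coeff (Phi nu s n) i) has_vector_derivative d) (at t)" and "n \<le> i"
  shows "d = 0"
proof -
  have "(\<lambda>s. coeff (Phi nu s n) i) = (\<lambda>s. if i = n then 1 else 0)"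
    using \<open>n \<le> i\<close> by (auto simp: lead_coeff_Phi[unfolded degree_Phi] coeff_eq_0 degree_Phi)
  then show ?thesis
    using D vector_derivative_unique_at[OF D] by (metis has_vector_derivative_const)
qed

lemma ip_derivative_Phi_monom:
  assumes deg_D: "degree D \<le> n"
    and D: "\<And>k. ((\<lambda>s. coeff (Phi nu s n) k) has_vector_derivative coeff D k) (at t)"
    and "k < n"
  shows "ip nu t D (monom 1 k)
    = - (ip nu t (pCons 0 (Phi nu t n)) (monom 1 k) + ip nu t (Phi nu t n) (monom 1 (Suc k))) / 2"
proof -
  have "((\<lambda>s. ip nu s (Phi nu s n) (monom 1 k)) has_vector_derivative
      ip nu t D (monom 1 k) + (ip nu t (pCons 0 (Phi nu t n)) (monom 1 k)
        + ip nu t (Phi nu t n) (monom 1 (Suc k))) / 2) (at t)"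
    using ip_family_has_vector_derivative[OF _ deg_D D] by (simp add: degree_Phi monom_Suc)
  moreover have "(\<lambda>s. ip nu s (Phi nu s n) (monom 1 k)) = (\<lambda>s. 0)"
    using \<open>k < n\<close> by (simp add: ip_monic_orthogonal_monom[OF monic_orthogonal_Phi])
  ultimately have "ip nu t D (monom 1 k) + (ip nu t (pCons 0 (Phi nu t n)) (monom 1 k)
        + ip nu t (Phi nu t n) (monom 1 (Suc k))) / 2 = 0"
    using vector_derivative_unique_at has_vector_derivative_const by metis
  then show ?thesis
    unfolding minus_divide_left[symmetric] by (simp only: eq_neg_iff_add_eq_0)
qed

lemma Phi_Suc_has_vector_derivative:
  "((\<lambda>s. poly (Phi nu s (Suc m)) z) has_vector_derivative
     - (ip nu t (Phi nu t (Suc m)) (Phi nu t (Suc m)) / (2 * ip nu t (Phi nu t m) (Phi nu t m))) *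
       (poly (Phi nu t m) z + szego_coeff t (Phi nu t (Suc m)) * poly (reversal m (Phi nu t m)) z))
   (at t)"
proof -
  define n where "n = Suc m"
  define c where "c = szego_coeff t (Phi nu t n)"
  define r where "r = ip nu t (Phi nu t n) (Phi nu t n) / (2 * ip nu t (Phi nu t m) (Phi nu t m))"
  define E where "E = smult (- r) (Phi nu t m + smult c (reversal m (Phi nu t m)))"
  obtain D where deg_D: "degree D \<le> n"
    and D: "\<And>k. ((\<lambda>s. coeff (Phi nu s n) k) has_vector_derivative coeff D k) (at t)"
    using coeffwise_vector_derivative[of "\<lambda>s. Phi nu s n" n t] coeff_Phi_differentiable
    by (auto simp: degree_Phi)
  have "D - E = 0"
  proof (rule eq_0_if_orthogonal_monoms)
    have "ip nu t (Phi nu t m) (Phi nu t m) \<noteq> 0"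
      by (simp add: ip_self_eq_0_iff Phi_neq_0)
    then show "\<forall>k<n. ip nu t (D - E) (monom 1 k) = 0"
      by (auto simp: ip_diff_left ip_derivative_Phi_monom[OF deg_D D] n_def E_def c_def r_def
          ip_add_left ip_smult_left ip_pCons_monic_orthogonal_monom[OF monic_orthogonal_Phi]
          ip_monic_orthogonal_monom[OF monic_orthogonal_Phi]
          ip_reversal_monic_orthogonal_monom[OF monic_orthogonal_Phi] field_simps)
    have "coeff E i = 0" if "n \<le> i" for i
      using that by (simp add: E_def n_def coeff_reversal coeff_eq_0 degree_Phi)
    then show "\<forall>i\<ge>n. coeff (D - E) i = 0"
      using coeff_derivative_Phi_eq_0[OF D] by simp
  qed
  then have "((\<lambda>s. poly (Phi nu s n) z) has_vector_derivative poly E z) (at t)"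
    using poly_has_vector_derivative_coeffwise[OF _ deg_D D] by (simp add: degree_Phi)
  then show ?thesis
    by (simp add: E_def n_def c_def r_def)
qed

end

theorem mainTheorem4:
  fixes nu :: "real measure" and n :: nat and z :: complex and t :: real
  assumes "circle_measure nu" and "nontrivial_measure nu" and "n \<ge> 1"
  shows "((\<lambda>s. poly (Phi nu s n) z) has_vector_derivative
           (- complex_of_real ((kappa nu t (n - 1))\<^sup>2 / (2 * (kappa nu t n)\<^sup>2)) *
             (poly (Phi nu t (n - 1)) z + cnj (alpha nu t n) * Phi_star nu t (n - 1) z)))
         (at t)"
proof -
  interpret nontrivial_circle_measure nu
    using assms(1,2) by unfold_locales
  obtain m where n: "n = Suc m"
    using assms(3) by (cases n) auto
  show ?thesis
    unfolding n diff_Suc_1 kappa_ratio cnj_alpha_eq Phi_star_eq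
    by (rule Phi_Suc_has_vector_derivative)
qed

end
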